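(* Assume the standing setting and hypothesis (H) below. Let $y\in S$ and let $z\in\mathcal{X}$ be its $\varepsilon$-representative. Then for every pattern $\pi\in U^k$ and every $t\in[0,k\tau]$, $$\|Y^{\pi}_{t,y}-\tilde{Y}^{\pi}_{t,z}\|\le\varepsilon.$$
   Context: Setting. Fix integers $M,k\ge1$, reals $L>0$, $\sigma>0$, $\tau>0$, $\varepsilon>0$; $h=L/(M+1)$, $S=[0,1]^M$, Euclidean norm $\|\cdot\|$ and inner product $\langle\cdot,\cdot\rangle$. $\mathcal{L}_h=\frac1{h^2}\mathrm{tridiag}(1,-2,1)$ ($M\times M$). $U\subset[0,1]^2$ is a finite set of modes; for $u=(u_0,u_L)$, $\varphi_h(u)=\frac1{h^2}(u_0,0,\dots,0,u_L)^\top$. A map $f:\mathbb{R}^M\to\mathbb{R}^M$ is given and $f_u(y)=\sigma\mathcal{L}_hy+\sigma\varphi_h(u)+f(y)$, assumed Lipschitz on $S$ with constant $L_u$. $\lambda_u$ is the OSL constant of $f_u$ on $S$ (smallest constant with $\langle f_u(y_1)-f_u(y_2),y_1-y_2\rangle\le\lambda_u\|y_1-y_2\|^2$ for all $y_1,y_2\in S$), and $C_u=\sup_{y\in S}L_u\|f_u(y)\|$. Trajectories. For a pattern $\pi=u_k\cdots u_1\in U^k$ and $y\in S$, $Y^\pi_{t,y}$ ($t\in[0,k\tau]$) is the continuous solution of $dy/dt=f_{u_k}(y)$ on $[0,\tau)$ with $Y^\pi_{0,y}=y$, continued by the solution of $dy/dt=f_{u_{k-1}}(y)$ on $[\tau,2\tau)$,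 and so on up to $f_{u_1}$ on $[(k-1)\tau,k\tau]$. The Euler image is $\tilde Y^u_{t,z}=z+tf_u(z)$ for $t\in[0,\tau]$, and for a pattern $\tilde Y^\pi_{t,z}=\tilde Y^{u_k}_{t,z}$ for $t\in[0,\tau]$ and $\tilde Y^{\pi}_{t,z}=\tilde Y^{u_{k-1}\cdots u_1}_{t-\tau,\tilde Y^{u_k}_{\tau,z}}$ for $t\in[\tau,k\tau]$. It is assumed that all these exact and Euler trajectories remain in $S$. Grid. $K$ is an integer with $K\ge\sqrt{M}/(2\varepsilon)$; $[0,1]$ is split into $K$ equal subintervals, hence $S$ into $K^M$ equal cubic cells; $\mathcal{X}$ is the set of cell centers. The $\varepsilon$-representative of $y\in S$ is the center of a (fixed choice of) cell containing $y$, so $\|y-z\|\le\varepsilon$. Hypothesis (H). For each $u\in U$ let $G_u=\sqrt3\,\varepsilon|\lambda_u|/C_u$ and $\alpha_u=1+\frac{|\lambda_u|G_u}{4}-\sqrt{1+(\lambda_uG_u/4)^2}$. (H) requires, for all $u\in U$: $\lambda_u<0$, $\frac{|\lambda_u|G_u}{4}<1$, and $\tau\le G_u(1-\alpha_u)$. *)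

theory Defs
  imports "HOL-Analysis.Analysis"
begin

text \<open>State space R^M is modelled as real^'n with 'n a finite linearly ordered index type,
  M = CARD('n). The linear order of 'n gives the ordering of the grid nodes 1..M.\<close>

definition unit_cube :: "(real^'n) set" where
  "unit_cube = {x. \<forall>i. 0 \<le> x$i \<and> x$i \<le> 1}"

definition mesh :: "real \<Rightarrow> 'n::finite itself \<Rightarrow> real" where
  "mesh L _ = L / (real CARD('n) + 1)"

definition prev_val :: "real^'n::{finite,linorder} \<Rightarrow> 'n \<Rightarrow> real" where
  "prev_val y i = (if \<exists>j. j < i then y $ (Max {j. j < i}) else 0)"

definition next_val :: "real^'n::{finite,linorder} \<Rightarrow> 'n \<Rightarrow> real" where
  "next_val y i = (if \<exists>j. i < j then y $ (Min {j. i < j}) else 0)"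

definition lap_h :: "real \<Rightarrow> real^'n::{finite,linorder} \<Rightarrow> real^'n::{finite,linorder}" where
  "lap_h h y = (\<chi> i. (prev_val y i - 2 * y$i + next_val y i) / h^2)"

definition phi_h :: "real \<Rightarrow> real \<times> real \<Rightarrow> real^'n::{finite,linorder}" where
  "phi_h h u = (\<chi> i. ((if i = Min UNIV then fst u else 0) + (if i = Max UNIV then snd u else 0)) / h^2)"

definition f_mode :: "real \<Rightarrow> real \<Rightarrow> (real^'n::{finite,linorder} \<Rightarrow> real^'n::{finite,linorder}) \<Rightarrow> real \<times> real \<Rightarrow> real^'n::{finite,linorder} \<Rightarrow> real^'n::{finite,linorder}" where
  "f_mode L \<sigma> f u y = \<sigma> *\<^sub>R lap_h (mesh L TYPE('n)) y + \<sigma> *\<^sub>R phi_h (mesh L TYPE('n)) u + f y"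

text \<open>One-sided Lipschitz constant: smallest lambda with
  <F a - F b, a - b> <= lambda |a - b|^2 on S.\<close>
definition osl_const :: "('a::real_inner \<Rightarrow> 'a) \<Rightarrow> 'a set \<Rightarrow> real" where
  "osl_const F S = Sup {inner (F a - F b) (a - b) / (norm (a - b))^2 | a b. a \<in> S \<and> b \<in> S \<and> a \<noteq> b}"

text \<open>Euler image along a pattern, the pattern given as list [u_k, ..., u_1]
  (head applied first, on [0,tau]).\<close>
fun euler_pat :: "('u \<Rightarrow> 'a::real_vector \<Rightarrow> 'a) \<Rightarrow> real \<Rightarrow> 'u list \<Rightarrow> 'a \<Rightarrow> real \<Rightarrow> 'a" where
  "euler_pat F \<tau> [] z t = z"
| "euler_pat F \<tau> (u # us) z t =
     (if t \<le> \<tau> then z + t *\<^sub>R F u z else euler_pat F \<tau> us (z + \<tau> *\<^sub>R F u z) (t - \<tau>))"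

definition is_pattern_traj :: "('u \<Rightarrow> 'a::real_normed_vector \<Rightarrow> 'a) \<Rightarrow> real \<Rightarrow> 'u list \<Rightarrow> 'a \<Rightarrow> (real \<Rightarrow> 'a) \<Rightarrow> bool" where
  "is_pattern_traj F \<tau> ps y Y \<longleftrightarrow>
     continuous_on {0 .. real (length ps) * \<tau>} Y \<and> Y 0 = y \<and>
     (\<forall>j < length ps. \<forall>t \<in> {real j * \<tau> ..< real (Suc j) * \<tau>}.
        (Y has_vector_derivative F (ps ! j) (Y t)) (at t within {real j * \<tau> .. real (Suc j) * \<tau>}))"

definition cell_centers :: "nat \<Rightarrow> (real^'n::finite) set" where
  "cell_centers K = {x. \<forall>i. \<exists>m::nat. m < K \<and> x$i = (2 * real m + 1) / (2 * real K)}"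

definition in_cell :: "nat \<Rightarrow> real^'n::finite \<Rightarrow> real^'n \<Rightarrow> bool" where
  "in_cell K c y \<longleftrightarrow> (\<forall>i. c$i - 1 / (2 * real K) \<le> y$i \<and> y$i \<le> c$i + 1 / (2 * real K))"

definition eps_representative :: "nat \<Rightarrow> real^'n::finite \<Rightarrow> real^'n \<Rightarrow> bool" where
  "eps_representative K y z \<longleftrightarrow> z \<in> cell_centers K \<and> in_cell K z y"

end

theory Submission
  imports Defs
begin

text \<open>On an interval where the mode \<open>u\<close> is active, let \<open>v\<close> be the squared distance between the
  exact solution and the Euler segment \<open>z + s f\<^sub>u(z)\<close>, and \<open>\<mu> = |\<lambda>\<^sub>u|\<close>. The one-sided Lipschitz
  bound contracts the distance, while the Euler segment leaves the flow only through the change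
  of slope \<open>f\<^sub>u(z + s f\<^sub>u(z)) - f\<^sub>u(z)\<close>, of size at most \<open>C\<^sub>u s\<close>; together
  \<open>v' \<le> -\<mu> v + C\<^sub>u\<^sup>2 s\<^sup>2 / \<mu>\<close>. Comparison with an explicit supersolution gives
  \<open>v(s) \<le> \<epsilon>\<^sup>2 (1 - \<mu> s + \<mu>\<^sup>2 s\<^sup>2 / 2) + C\<^sub>u\<^sup>2 s\<^sup>3 / (3 \<mu>)\<close> whenever \<open>v(0) \<le> \<epsilon>\<^sup>2\<close>, and the step-size
  condition of (H) says precisely that this bound stays below \<open>\<epsilon>\<^sup>2\<close> on \<open>[0, \<tau>]\<close>. Hence an error of
  at most \<open>\<epsilon>\<close> at the start of a mode interval persists through it, and induction along the
  pattern carries the bound from time 0, where it holds because a grid cell has half-diagonal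
  \<open>\<surd>M / (2K) \<le> \<epsilon>\<close>.\<close>

lemma nonpos_of_deriv_le_neg_mult:
  fixes w w' :: "real \<Rightarrow> real"
  assumes "continuous_on {a..b} w"
    and "\<And>s. a < s \<Longrightarrow> s < b \<Longrightarrow> (w has_real_derivative w' s) (at s)"
    and "\<And>s. a < s \<Longrightarrow> s < b \<Longrightarrow> w' s \<le> - mu * w s"
    and "w a \<le> 0" and "t \<in> {a..b}"
  shows "w t \<le> 0"
proof -
  define h where "h = (\<lambda>s. exp (mu * s) * w s)"
  have "h t \<le> h a"
  proof (rule DERIV_nonpos_imp_decreasing_open[of a t h])
    have "continuous_on {a..t} w"
      using assms(5) by (intro continuous_on_subset[OF assms(1)]) auto
    then show "continuous_on {a..t} h"
      unfolding h_def by (auto intro!: continuous_intros)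
    show "\<exists>y. (h has_real_derivative y) (at s) \<and> y \<le> 0" if "a < s" "s < t" for s
    proof (intro exI conjI)
      show "(h has_real_derivative exp (mu * s) * (mu * w s + w' s)) (at s)"
        unfolding h_def using that assms(5)
        by (auto intro!: derivative_eq_intros assms(2) simp: algebra_simps)
      show "exp (mu * s) * (mu * w s + w' s) \<le> 0"
        using assms(3)[of s] that assms(5) by (intro mult_nonneg_nonpos) auto
    qed
  qed (use assms(5) in auto)
  also have "h a \<le> 0"
    using assms(4) by (simp add: h_def mult_nonneg_nonpos)
  finally have "exp (mu * t) * w t \<le> 0"
    by (simp add: h_def)
  then show ?thesis by (simp add: mult_le_0_iff)
qed

lemma has_real_derivative_norm_squared:
  fixes e :: "real \<Rightarrow> 'a::real_inner"
  assumes "(e has_vector_derivative D) (at s)"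
  shows "((\<lambda>x. (norm (e x))\<^sup>2) has_real_derivative 2 * inner (e s) D) (at s)"
proof -
  have "(e has_derivative (\<lambda>h. h *\<^sub>R D)) (at s)"
    using assms by (simp add: has_vector_derivative_def)
  from has_derivative_inner[OF this this]
  have "((\<lambda>x. inner (e x) (e x)) has_derivative (\<lambda>h. inner (e s) (h *\<^sub>R D) + inner (h *\<^sub>R D) (e s))) (at s)" .
  moreover have "(\<lambda>h. inner (e s) (h *\<^sub>R D) + inner (h *\<^sub>R D) (e s)) = (*) (2 * inner (e s) D)"
    by (auto simp: fun_eq_iff inner_commute algebra_simps)
  ultimately show ?thesis
    by (simp add: has_field_derivative_def power2_norm_eq_inner)
qed

lemma inner_euler_defect_le:
  fixes F :: "'a::real_inner \<Rightarrow> 'a"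
  assumes osl: "inner (F x - F z) (x - z) \<le> - mu * (norm (x - z))\<^sup>2"
    and lip: "norm (F z - F z0) \<le> Lc * norm (z - z0)"
    and z: "z = z0 + s *\<^sub>R F z0" and "s \<ge> 0"
    and C: "Lc * norm (F z0) \<le> C" and "mu > 0"
  shows "2 * inner (x - z) (F x - F z0) \<le> - mu * (norm (x - z))\<^sup>2 + C\<^sup>2 * s\<^sup>2 / mu"
proof -
  define r where "r = norm (x - z)"
  have "inner (x - z) (F z - F z0) \<le> r * norm (F z - F z0)"
    unfolding r_def by (rule norm_cauchy_schwarz)
  also have "\<dots> \<le> r * (s * C)"
  proof (rule mult_left_mono)
    have "Lc * norm (z - z0) = s * (Lc * norm (F z0))"
      using \<open>s \<ge> 0\<close> by (simp add: z)
    also have "\<dots> \<le> s * C"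
      using \<open>s \<ge> 0\<close> C by (rule mult_left_mono[rotated])
    finally show "norm (F z - F z0) \<le> s * C"
      using lip by linarith
  qed (simp add: r_def)
  finally have "2 * inner (x - z) (F x - F z0) \<le> 2 * (- mu * r\<^sup>2 + r * (s * C))"
    using osl by (simp add: inner_diff_right inner_commute r_def)
  also have "\<dots> = - mu * r\<^sup>2 + C\<^sup>2 * s\<^sup>2 / mu - (mu * r - s * C)\<^sup>2 / mu"
    using \<open>mu > 0\<close> by (simp add: field_simps power2_eq_square)
  also have "\<dots> \<le> - mu * r\<^sup>2 + C\<^sup>2 * s\<^sup>2 / mu"
    using \<open>mu > 0\<close> by simp
  finally show ?thesis by (simp add: r_def)
qed

lemma euler_step_error:
  fixes F :: "'a::real_inner \<Rightarrow> 'a" and Y :: "real \<Rightarrow> 'a"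
  assumes osl: "\<And>x z. x \<in> S \<Longrightarrow> z \<in> S \<Longrightarrow> inner (F x - F z) (x - z) \<le> - mu * (norm (x - z))\<^sup>2"
    and lip: "Lc-lipschitz_on S F"
    and C: "Lc * norm (F z0) \<le> C" and mu: "mu > 0"
    and budget: "\<And>s. s \<in> {0..\<tau>} \<Longrightarrow> ep\<^sup>2 * mu\<^sup>2 * s\<^sup>2 / 2 + C\<^sup>2 * s ^ 3 / (3 * mu) \<le> ep\<^sup>2 * mu * s"
    and init: "norm (Y a - z0) \<le> ep"
    and cont: "continuous_on {a..a + \<tau>} Y"
    and der: "\<And>s. a < s \<Longrightarrow> s < a + \<tau> \<Longrightarrow> (Y has_vector_derivative F (Y s)) (at s)"
    and Y_in: "\<And>s. s \<in> {a..a + \<tau>} \<Longrightarrow> Y s \<in> S"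
    and euler_in: "\<And>s. s \<in> {0..\<tau>} \<Longrightarrow> z0 + s *\<^sub>R F z0 \<in> S"
    and t: "t \<in> {0..\<tau>}"
  shows "norm (Y (a + t) - (z0 + t *\<^sub>R F z0)) \<le> ep"
proof -
  define e where "e s = Y s - (z0 + (s - a) *\<^sub>R F z0)" for s
  define B where "B s = ep\<^sup>2 * (1 - mu * (s - a) + mu\<^sup>2 * (s - a)\<^sup>2 / 2) + C\<^sup>2 * (s - a) ^ 3 / (3 * mu)" for s
  define B' where "B' s = ep\<^sup>2 * (mu\<^sup>2 * (s - a) - mu) + C\<^sup>2 * (s - a)\<^sup>2 / mu" for s
  \<comment> \<open>\<open>B\<close> is a supersolution of \<open>v' = - mu v + C\<^sup>2 (s - a)\<^sup>2 / mu\<close>, the differential inequality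
    satisfied by the squared error \<open>v = (norm e)\<^sup>2\<close>.\<close>
  have "(norm (e (a + t)))\<^sup>2 - B (a + t) \<le> 0"
  proof (rule nonpos_of_deriv_le_neg_mult[where w = "\<lambda>s. (norm (e s))\<^sup>2 - B s"
        and w' = "\<lambda>s. 2 * inner (e s) (F (Y s) - F z0) - B' s" and b = "a + \<tau>"])
    show "continuous_on {a..a + \<tau>} (\<lambda>s. (norm (e s))\<^sup>2 - B s)"
      unfolding e_def B_def using mu by (auto intro!: continuous_intros cont)
    fix s assume s: "a < s" "s < a + \<tau>"
    have "(e has_vector_derivative F (Y s) - F z0) (at s)"
      unfolding e_def using der[OF s] by (auto intro!: derivative_eq_intros)
    moreover have "(B has_real_derivative B' s) (at s)"
      unfolding B_def B'_def using mu
      by (auto intro!: derivative_eq_intros simp: field_simps power2_eq_square power3_eq_cube)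
    ultimately show "((\<lambda>s. (norm (e s))\<^sup>2 - B s) has_real_derivative 2 * inner (e s) (F (Y s) - F z0) - B' s) (at s)"
      by (intro DERIV_diff has_real_derivative_norm_squared)
    have "2 * inner (e s) (F (Y s) - F z0) \<le> - mu * (norm (e s))\<^sup>2 + C\<^sup>2 * (s - a)\<^sup>2 / mu"
      unfolding e_def
    proof (rule inner_euler_defect_le[OF osl _ refl _ C mu])
      show "Y s \<in> S" "z0 + (s - a) *\<^sub>R F z0 \<in> S" "s - a \<ge> 0"
        using s Y_in euler_in by auto
      show "norm (F (z0 + (s - a) *\<^sub>R F z0) - F z0) \<le> Lc * norm (z0 + (s - a) *\<^sub>R F z0 - z0)"
        using s euler_in[of 0] euler_in[of "s - a"] lip by (intro lipschitz_on_normD) auto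
    qed
    moreover have "0 \<le> ep\<^sup>2 * mu ^ 3 * (s - a)\<^sup>2 / 2 + C\<^sup>2 * (s - a) ^ 3 / 3"
      using s mu by simp
    moreover have "- mu * B s + C\<^sup>2 * (s - a)\<^sup>2 / mu - B' s = - (ep\<^sup>2 * mu ^ 3 * (s - a)\<^sup>2 / 2 + C\<^sup>2 * (s - a) ^ 3 / 3)"
      unfolding B_def B'_def using mu by (simp add: field_simps power2_eq_square power3_eq_cube)
    ultimately show "2 * inner (e s) (F (Y s) - F z0) - B' s \<le> - mu * ((norm (e s))\<^sup>2 - B s)"
      by (simp add: algebra_simps)
  next
    show "(norm (e a))\<^sup>2 - B a \<le> 0"
      using init by (simp add: e_def B_def power_mono)
  qed (use t in auto)
  then have "(norm (e (a + t)))\<^sup>2 \<le> B (a + t)" by simp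
  also have "B (a + t) \<le> ep\<^sup>2"
    using budget[OF t] by (simp add: B_def algebra_simps)
  finally have "(norm (e (a + t)))\<^sup>2 \<le> ep\<^sup>2" by simp
  moreover have "0 \<le> ep"
    using init norm_ge_zero by (rule order_trans[rotated])
  ultimately have "norm (e (a + t)) \<le> ep"
    by (rule power2_le_imp_le)
  then show ?thesis by (simp add: e_def)
qed

lemma step_size_error_budget:
  fixes lam ep C \<tau> t :: real
  defines "G \<equiv> sqrt 3 * ep * \<bar>lam\<bar> / C"
  defines "\<alpha> \<equiv> 1 + \<bar>lam\<bar> * G / 4 - sqrt (1 + (lam * G / 4)\<^sup>2)"
  assumes "lam < 0" and "\<tau> > 0" and "\<tau> \<le> G * (1 - \<alpha>)" and t: "t \<in> {0..\<tau>}"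
  shows "ep\<^sup>2 * \<bar>lam\<bar>\<^sup>2 * t\<^sup>2 / 2 + C\<^sup>2 * t ^ 3 / (3 * \<bar>lam\<bar>) \<le> ep\<^sup>2 * \<bar>lam\<bar> * t"
proof -
  define mu where "mu = \<bar>lam\<bar>"
  define q where "q = mu * G / 4"
  have mu: "mu > 0" using \<open>lam < 0\<close> by (simp add: mu_def)
  have q_lt: "q < sqrt (1 + q\<^sup>2)"
    by (rule real_less_rsqrt) simp
  have "(lam * G / 4)\<^sup>2 = q\<^sup>2"
    by (simp add: q_def mu_def power_mult_distrib power_divide)
  then have tau_le: "\<tau> \<le> G * (sqrt (1 + q\<^sup>2) - q)"
    using \<open>\<tau> \<le> G * (1 - \<alpha>)\<close> by (simp add: \<alpha>_def q_def mu_def)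
  then have "0 < G * (sqrt (1 + q\<^sup>2) - q)"
    using \<open>\<tau> > 0\<close> by linarith
  then have "G > 0"
    using q_lt by (simp add: zero_less_mult_iff)
  \<comment> \<open>In the scaled time \<open>r = t / G\<close> the budget becomes \<open>r\<^sup>2 + 2 q r \<le> 1\<close>, i.e. \<open>r \<le> sqrt (1 + q\<^sup>2) - q\<close>.\<close>
  define r where "r = t / G"
  have t_eq: "t = G * r" using \<open>G > 0\<close> by (simp add: r_def)
  have "r \<le> sqrt (1 + q\<^sup>2) - q"
    using t tau_le \<open>G > 0\<close> by (simp add: r_def pos_divide_le_eq mult.commute)
  moreover have "0 \<le> r" "0 < q"
    using t \<open>G > 0\<close> mu by (simp_all add: r_def q_def)
  ultimately have "(r + q)\<^sup>2 \<le> (sqrt (1 + q\<^sup>2))\<^sup>2"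
    by (intro power_mono) auto
  then have r_budget: "2 * q * r + r\<^sup>2 \<le> 1"
    by (simp add: power2_eq_square algebra_simps)
  have C2: "C\<^sup>2 = 3 * ep\<^sup>2 * mu\<^sup>2 / G\<^sup>2"
    using \<open>G > 0\<close> by (auto simp: G_def mu_def field_simps power_mult_distrib)
  have "ep\<^sup>2 * mu\<^sup>2 * t\<^sup>2 / 2 + C\<^sup>2 * t ^ 3 / (3 * mu) = ep\<^sup>2 * mu * t * (2 * q * r + r\<^sup>2)"
    unfolding C2 t_eq q_def using \<open>G > 0\<close> mu by (simp add: field_simps power2_eq_square power3_eq_cube)
  also have "\<dots> \<le> ep\<^sup>2 * mu * t"
    using r_budget mu t by (simp add: mult_left_le)
  finally show ?thesis by (simp add: mu_def)
qed

lemma inner_le_osl_const: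
  fixes F :: "'a::real_inner \<Rightarrow> 'a"
  assumes "Lc-lipschitz_on S F" and "a \<in> S" and "b \<in> S"
  shows "inner (F a - F b) (a - b) \<le> osl_const F S * (norm (a - b))\<^sup>2"
proof (cases "a = b")
  case False
  define Q where "Q = {inner (F a - F b) (a - b) / (norm (a - b))\<^sup>2 | a b. a \<in> S \<and> b \<in> S \<and> a \<noteq> b}"
  have "bdd_above Q"
  proof (rule bdd_aboveI)
    fix q assume "q \<in> Q"
    then obtain x y where q: "q = inner (F x - F y) (x - y) / (norm (x - y))\<^sup>2"
      and xy: "x \<in> S" "y \<in> S" "x \<noteq> y" unfolding Q_def by blast
    have "inner (F x - F y) (x - y) \<le> norm (F x - F y) * norm (x - y)"
      by (rule norm_cauchy_schwarz)
    also have "\<dots> \<le> Lc * norm (x - y) * norm (x - y)"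
      using lipschitz_on_normD[OF assms(1) xy(1,2)] by (rule mult_right_mono) simp
    finally show "q \<le> Lc"
      using xy(3) by (simp add: q divide_le_eq power2_eq_square mult.assoc)
  qed
  moreover have "inner (F a - F b) (a - b) / (norm (a - b))\<^sup>2 \<in> Q"
    unfolding Q_def using assms(2,3) False by blast
  ultimately have "inner (F a - F b) (a - b) / (norm (a - b))\<^sup>2 \<le> osl_const F S"
    unfolding osl_const_def Q_def[symmetric] by (rule cSup_upper[rotated])
  then show ?thesis
    using False by (simp add: divide_le_eq)
qed simp

lemma le_SUP_lipschitz_norm:
  fixes F :: "'a::metric_space \<Rightarrow> 'b::real_normed_vector"
  assumes "Lc-lipschitz_on S F" and "compact S" and "x \<in> S"
  shows "Lc * norm (F x) \<le> (SUP w\<in>S. Lc * norm (F w))"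
proof (rule cSUP_upper[OF \<open>x \<in> S\<close>])
  have "continuous_on S (\<lambda>w. Lc * norm (F w))"
    using lipschitz_on_continuous_on[OF assms(1)] by (intro continuous_intros)
  then show "bdd_above ((\<lambda>w. Lc * norm (F w)) ` S)"
    using \<open>compact S\<close> by (intro bounded_imp_bdd_above compact_imp_bounded compact_continuous_image)
qed

lemma euler_step_error_of_step_bound:
  fixes F :: "'a::real_inner \<Rightarrow> 'a" and S :: "'a set" and Lc ep :: real
  defines "lam \<equiv> osl_const F S"
  defines "C \<equiv> SUP x\<in>S. Lc * norm (F x)"
  defines "G \<equiv> sqrt 3 * ep * \<bar>lam\<bar> / C"
  defines "\<alpha> \<equiv> 1 + \<bar>lam\<bar> * G / 4 - sqrt (1 + (lam * G / 4)\<^sup>2)"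
  assumes lip: "Lc-lipschitz_on S F" and "compact S"
    and lam: "lam < 0" and "\<tau> > 0" and tau: "\<tau> \<le> G * (1 - \<alpha>)"
    and "norm (Y a - z0) \<le> ep"
    and "continuous_on {a..a + \<tau>} Y"
    and "\<And>s. a < s \<Longrightarrow> s < a + \<tau> \<Longrightarrow> (Y has_vector_derivative F (Y s)) (at s)"
    and "\<And>s. s \<in> {a..a + \<tau>} \<Longrightarrow> Y s \<in> S"
    and euler_in: "\<And>s. s \<in> {0..\<tau>} \<Longrightarrow> z0 + s *\<^sub>R F z0 \<in> S"
    and "t \<in> {0..\<tau>}"
  shows "norm (Y (a + t) - (z0 + t *\<^sub>R F z0)) \<le> ep"
proof (rule euler_step_error[where mu = "\<bar>lam\<bar>", OF _ lip])
  show "inner (F x - F z) (x - z) \<le> - \<bar>lam\<bar> * (norm (x - z))\<^sup>2" if "x \<in> S" "z \<in> S" for x z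
    using inner_le_osl_const[OF lip that] lam by (simp add: lam_def)
  have "z0 \<in> S" using euler_in[of 0] \<open>\<tau> > 0\<close> by simp
  then show "Lc * norm (F z0) \<le> C"
    unfolding C_def using lip \<open>compact S\<close> by (rule le_SUP_lipschitz_norm[rotated 2])
  show "ep\<^sup>2 * \<bar>lam\<bar>\<^sup>2 * s\<^sup>2 / 2 + C\<^sup>2 * s ^ 3 / (3 * \<bar>lam\<bar>) \<le> ep\<^sup>2 * \<bar>lam\<bar> * s" if "s \<in> {0..\<tau>}" for s
    using step_size_error_budget[OF lam \<open>\<tau> > 0\<close> _ that] tau by (simp add: G_def \<alpha>_def)
qed (use assms lam in auto)

lemma compact_unit_cube: "compact (unit_cube :: (real^'n::finite) set)"
proof -
  have "unit_cube = cbox 0 (1 :: real^'n)"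
    by (auto simp: unit_cube_def mem_box_cart)
  then show ?thesis
    using compact_cbox by metis
qed

lemma norm_diff_le_of_in_cell:
  fixes y z :: "real^'n::finite"
  assumes "in_cell K z y" and "ep > 0" and "real K \<ge> sqrt (real CARD('n)) / (2 * ep)"
  shows "norm (y - z) \<le> ep"
proof -
  have "0 < sqrt (real CARD('n)) / (2 * ep)"
    using assms(2) by simp
  then have "real K > 0"
    using assms(3) by linarith
  have "\<bar>(y - z) $ i\<bar> \<le> 1 / (2 * real K)" for i
    using assms(1) unfolding in_cell_def by (simp add: abs_le_iff) (metis add.commute diff_le_eq le_diff_eq)
  then have "(\<Sum>i\<in>UNIV. (norm ((y - z) $ i))\<^sup>2) \<le> (\<Sum>i\<in>(UNIV::'n set). (1 / (2 * real K))\<^sup>2)"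
    by (intro sum_mono power_mono) auto
  then have "norm (y - z) \<le> sqrt (real CARD('n) * (1 / (2 * real K))\<^sup>2)"
    unfolding norm_vec_def L2_set_def by (intro real_sqrt_le_mono) simp
  also have "\<dots> = sqrt (real CARD('n)) / (2 * real K)"
    using \<open>real K > 0\<close> by (simp add: real_sqrt_mult)
  also have "\<dots> \<le> ep"
    using assms(2,3) \<open>real K > 0\<close> by (simp add: divide_le_eq pos_divide_le_eq mult_ac)
  finally show ?thesis .
qed

lemma euler_pat_at_0: "\<tau> \<ge> 0 \<Longrightarrow> euler_pat F \<tau> ps z 0 = z"
  by (cases ps) auto

lemma euler_pat_Cons_shift:
  assumes "\<tau> \<ge> 0" and "s \<ge> 0"
  shows "euler_pat F \<tau> (u # us) z (s + \<tau>) = euler_pat F \<tau> us (z + \<tau> *\<^sub>R F u z) s"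
  using assms by (cases "s = 0") (auto simp: euler_pat_at_0)

lemma euler_pat_tracking:
  fixes F :: "'u \<Rightarrow> 'a::real_normed_vector \<Rightarrow> 'a" and Y :: "real \<Rightarrow> 'a"
  assumes "\<tau> > 0"
    and step: "\<And>j w s. j < length ps \<Longrightarrow> norm (Y (real j * \<tau>) - w) \<le> ep \<Longrightarrow>
      (\<And>r. r \<in> {0..\<tau>} \<Longrightarrow> w + r *\<^sub>R F (ps ! j) w \<in> S) \<Longrightarrow> s \<in> {0..\<tau>} \<Longrightarrow>
      norm (Y (real j * \<tau> + s) - (w + s *\<^sub>R F (ps ! j) w)) \<le> ep"
    and "norm (Y 0 - z) \<le> ep"
    and "\<And>s. s \<in> {0..real (length ps) * \<tau>} \<Longrightarrow> euler_pat F \<tau> ps z s \<in> S"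
    and "t \<in> {0..real (length ps) * \<tau>}"
  shows "norm (Y t - euler_pat F \<tau> ps z t) \<le> ep"
  using assms(2-)
proof (induction ps arbitrary: Y z t)
  case Nil
  then show ?case by simp
next
  case (Cons u us)
  have length_Cons: "real (length (u # us)) * \<tau> = real (length us) * \<tau> + \<tau>"
    by (simp add: algebra_simps)
  have first_step: "norm (Y s - (z + s *\<^sub>R F u z)) \<le> ep" if "s \<in> {0..\<tau>}" for s
  proof -
    have "z + r *\<^sub>R F u z \<in> S" if "r \<in> {0..\<tau>}" for r
    proof -
      have "0 \<le> real (length us) * \<tau>"
        using \<open>\<tau> > 0\<close> by simp
      then have "r \<in> {0..real (length (u # us)) * \<tau>}"
        using that unfolding length_Cons atLeastAtMost_iff by linarith
      then show ?thesis
        using Cons.prems(3)[of r] that by simp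
    qed
    then show ?thesis
      using Cons.prems(1)[of 0 z s] Cons.prems(2) that by simp
  qed
  show ?case
  proof (cases "t \<le> \<tau>")
    case True
    then show ?thesis
      using first_step[of t] Cons.prems(4) by auto
  next
    case False
    define z1 where "z1 = z + \<tau> *\<^sub>R F u z"
    have "norm (Y (t - \<tau> + \<tau>) - euler_pat F \<tau> us z1 (t - \<tau>)) \<le> ep"
    proof (rule Cons.IH[where Y = "\<lambda>s. Y (s + \<tau>)"])
      show "norm (Y (real j * \<tau> + s + \<tau>) - (w + s *\<^sub>R F (us ! j) w)) \<le> ep"
        if "j < length us" "norm (Y (real j * \<tau> + \<tau>) - w) \<le> ep"
          "\<And>r. r \<in> {0..\<tau>} \<Longrightarrow> w + r *\<^sub>R F (us ! j) w \<in> S" "s \<in> {0..\<tau>}" for j w s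
        using Cons.prems(1)[of "Suc j" w s] that by (simp add: algebra_simps)
      show "norm (Y (0 + \<tau>) - z1) \<le> ep"
        using first_step[of \<tau>] \<open>\<tau> > 0\<close> by (simp add: z1_def)
      show "euler_pat F \<tau> us z1 s \<in> S" if "s \<in> {0..real (length us) * \<tau>}" for s
      proof -
        have "s + \<tau> \<in> {0..real (length (u # us)) * \<tau>}"
          using that \<open>\<tau> > 0\<close> unfolding length_Cons atLeastAtMost_iff by linarith
        moreover have "euler_pat F \<tau> (u # us) z (s + \<tau>) = euler_pat F \<tau> us z1 s"
          using that \<open>\<tau> > 0\<close> unfolding z1_def by (intro euler_pat_Cons_shift) auto
        ultimately show ?thesis
          using Cons.prems(3) by metis
      qed
      show "t - \<tau> \<in> {0..real (length us) * \<tau>}"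
        using Cons.prems(4) False unfolding length_Cons atLeastAtMost_iff by linarith
    qed
    moreover have "euler_pat F \<tau> (u # us) z t = euler_pat F \<tau> us z1 (t - \<tau>)"
      using False by (simp add: z1_def)
    ultimately show ?thesis by simp
  qed
qed

lemma segment_subset_pattern_interval:
  assumes "j < n" and "\<tau> \<ge> 0"
  shows "{real j * \<tau>..real j * \<tau> + \<tau>} \<subseteq> {0..real n * \<tau>}"
proof -
  have "real j * \<tau> + \<tau> = real (Suc j) * \<tau>"
    by (simp add: algebra_simps)
  also have "\<dots> \<le> real n * \<tau>"
    using assms by (intro mult_right_mono) auto
  finally show ?thesis
    using assms(2) by auto
qed

lemma pattern_traj_segment:
  assumes traj: "is_pattern_traj F \<tau> ps y Y" and "j < length ps" and "\<tau> > 0"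
  shows "continuous_on {real j * \<tau>..real j * \<tau> + \<tau>} Y"
    and "\<And>s. real j * \<tau> < s \<Longrightarrow> s < real j * \<tau> + \<tau> \<Longrightarrow> (Y has_vector_derivative F (ps ! j) (Y s)) (at s)"
proof -
  have Suc_j: "real (Suc j) * \<tau> = real j * \<tau> + \<tau>"
    by (simp add: algebra_simps)
  have segment: "{real j * \<tau>..real j * \<tau> + \<tau>} \<subseteq> {0..real (length ps) * \<tau>}"
    using \<open>j < length ps\<close> \<open>\<tau> > 0\<close> by (intro segment_subset_pattern_interval) auto
  then show "continuous_on {real j * \<tau>..real j * \<tau> + \<tau>} Y"
    using traj unfolding is_pattern_traj_def by (blast intro: continuous_on_subset[OF _ segment])
  have derivs: "\<forall>s \<in> {real j * \<tau> ..< real (Suc j) * \<tau>}.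
      (Y has_vector_derivative F (ps ! j) (Y s)) (at s within {real j * \<tau> .. real (Suc j) * \<tau>})"
    using traj \<open>j < length ps\<close> unfolding is_pattern_traj_def by blast
  fix s assume s: "real j * \<tau> < s" "s < real j * \<tau> + \<tau>"
  with derivs[unfolded Suc_j]
  have "(Y has_vector_derivative F (ps ! j) (Y s)) (at s within {real j * \<tau>..real j * \<tau> + \<tau>})"
    by simp
  moreover have "at s within {real j * \<tau>..real j * \<tau> + \<tau>} = at s"
    using s by (intro at_within_interior) (simp add: interior_atLeastAtMost_real)
  ultimately show "(Y has_vector_derivative F (ps ! j) (Y s)) (at s)"
    by simp
qed

theorem theorem1:
  fixes f :: "real^'n::{finite,linorder} \<Rightarrow> real^'n::{finite,linorder}"
    and U :: "(real \<times> real) set"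
    and Lc :: "real \<times> real \<Rightarrow> real"
    and L \<sigma> \<tau> \<epsilon> :: real
    and k K :: nat
    and y z :: "real^'n::{finite,linorder}"
    and ps :: "(real \<times> real) list"
    and Y :: "real \<Rightarrow> real^'n::{finite,linorder}"
    and t :: real
  defines "fu \<equiv> f_mode L \<sigma> f"
  defines "lam \<equiv> (\<lambda>u. osl_const (fu u) unit_cube)"
  defines "C \<equiv> (\<lambda>u. SUP x\<in>unit_cube. Lc u * norm (fu u x))"
  defines "G \<equiv> (\<lambda>u. sqrt 3 * \<epsilon> * \<bar>lam u\<bar> / C u)"
  defines "\<alpha> \<equiv> (\<lambda>u. 1 + \<bar>lam u\<bar> * G u / 4 - sqrt (1 + (lam u * G u / 4)^2))"
  assumes "k \<ge> 1" and "L > 0" and "\<sigma> > 0" and "\<tau> > 0" and "\<epsilon> > 0"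
    and "finite U" and "U \<subseteq> {0..1} \<times> {0..1}"
    and "\<And>u. u \<in> U \<Longrightarrow> (Lc u)-lipschitz_on unit_cube (fu u)"
    and "real K \<ge> sqrt (real CARD('n::{finite,linorder})) / (2 * \<epsilon>)"
    and H: "\<And>u. u \<in> U \<Longrightarrow> lam u < 0 \<and> \<bar>lam u\<bar> * G u / 4 < 1 \<and> \<tau> \<le> G u * (1 - \<alpha> u)"
    and "y \<in> unit_cube" and "eps_representative K y z"
    and "length ps = k" and "set ps \<subseteq> U"
    and "is_pattern_traj fu \<tau> ps y Y"
    and "\<forall>s \<in> {0 .. real k * \<tau>}. Y s \<in> unit_cube"
    and "\<forall>s \<in> {0 .. real k * \<tau>}. euler_pat fu \<tau> ps z s \<in> unit_cube"
    and "t \<in> {0 .. real k * \<tau>}"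
  shows "norm (Y t - euler_pat fu \<tau> ps z t) \<le> \<epsilon>"
proof -
  have step: "norm (Y (real j * \<tau> + s) - (w + s *\<^sub>R fu (ps ! j) w)) \<le> \<epsilon>"
    if j: "j < length ps" and "norm (Y (real j * \<tau>) - w) \<le> \<epsilon>"
      and "\<And>r. r \<in> {0..\<tau>} \<Longrightarrow> w + r *\<^sub>R fu (ps ! j) w \<in> unit_cube"
      and "s \<in> {0..\<tau>}" for j w s
  proof -
    have "ps ! j \<in> U" using j assms(19) by auto
    then have lip: "(Lc (ps ! j))-lipschitz_on unit_cube (fu (ps ! j))"
      and lam: "lam (ps ! j) < 0" and tau: "\<tau> \<le> G (ps ! j) * (1 - \<alpha> (ps ! j))"
      using assms(13) H by auto
    have Y_in: "Y r \<in> unit_cube" if "r \<in> {real j * \<tau>..real j * \<tau> + \<tau>}" for r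
      using segment_subset_pattern_interval[OF j less_imp_le[OF \<open>\<tau> > 0\<close>]] that assms(21)
      unfolding assms(18) by blast
    note segment = pattern_traj_segment[OF assms(20) j \<open>\<tau> > 0\<close>]
    show ?thesis
      by (rule euler_step_error_of_step_bound[OF lip compact_unit_cube lam[unfolded assms(2)] \<open>\<tau> > 0\<close>
            tau[unfolded assms(2-5)] that(2) segment Y_in that(3,4)])
  qed
  have "Y 0 = y" using assms(20) by (simp add: is_pattern_traj_def)
  moreover have "norm (y - z) \<le> \<epsilon>"
    using assms(17) \<open>\<epsilon> > 0\<close> assms(14) by (intro norm_diff_le_of_in_cell) (simp_all add: eps_representative_def)
  ultimately have "norm (Y 0 - z) \<le> \<epsilon>" by simp
  then show ?thesis
    using euler_pat_tracking[where S = unit_cube, OF \<open>\<tau> > 0\<close> step] assms(18,22,23) by blast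
qed

end
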